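(* Consider the binary delegated search model described in the context. Let $w_i = y_i - c_i/p_i$ and $z_i = x_i - c_i/p_i$, and fix an ordering of the options in non-increasing order of $w_i$. For a half-infinite interval $X$ of the form $X=(\theta,\infty)$ or $X=[\theta,\infty)$ with $\theta\in\mathbb{R}$, let $M(X)$ be the single-proposal mechanism in which a proposal $\omega_i$ is accepted if and only if $\omega_i$ is feasible and $z_i\in X$. Suppose that under $M(X)$ the agent examines the options $\omega_i$ with $z_i \in X$ in the fixed order (non-increasing $w_i$) and proposes the first one found to be feasible (this is a best response of the agent to $M(X)$). Then there exists such an interval $X$ for which the expected net value of $M(X)$ to the principal (the principal's value $x_i$ of the accepted proposal, or $0$ if none is accepted, minus the total cost of all options examined by the agent) is at least one half of the maximum expected net value the principal could achieve by performing an optimal sequential search herself, without delegation.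
   Context: Binary model: there are $m$ options $\omega_1,\ldots,\omega_m$. Option $\omega_i$ is feasible with probability $p_i>0$, independently of the other options. If feasible it yields the commonly known utility $x_i\ge 0$ to the principal and $y_i$ to the agent; if infeasible it yields $0$ to both. Determining whether $\omega_i$ is feasible requires paying a cost $c_i\ge 0$, and it is assumed that $c_i\le p_i y_i$ for every $i$. In delegated search the agent adaptively chooses options to examine, paying their costs, and then proposes one option. A single-proposal mechanism accepts the proposal if it lies in a specified eligible set and otherwise the outcome is the status quo with value $0$. The agent maximizes the expected $y$-value of the accepted proposal minus his total examination costs. Self-search by the principal: the principal adaptively examines options in any order she chooses (paying their costs), stops at any time, and selects at most one examined feasible option. Her net value is the $x$-value of the selected option minus the total examination costs. *)

theory Defs
  imports Main "HOL-Library.Multiset" Complex_Main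
begin

(* Options are indexed by 0..<m. p, x, y, c :: nat => real. *)

definition wv :: "(nat \<Rightarrow> real) \<Rightarrow> (nat \<Rightarrow> real) \<Rightarrow> (nat \<Rightarrow> real) \<Rightarrow> nat \<Rightarrow> real" where
  "wv p y c i = y i - c i / p i"

definition zv :: "(nat \<Rightarrow> real) \<Rightarrow> (nat \<Rightarrow> real) \<Rightarrow> (nat \<Rightarrow> real) \<Rightarrow> nat \<Rightarrow> real" where
  "zv p x c i = x i - c i / p i"

(* Expected net value to the principal of the single-proposal mechanism with eligible set
   {i. z_i \<in> X}, when the agent examines eligible options in the order given by the list
   and proposes the first feasible one: principal gets x_i of the accepted proposal
   minus the costs of all options examined. *)
fun deleg_val :: "(nat \<Rightarrow> real) \<Rightarrow> (nat \<Rightarrow> real) \<Rightarrow> (nat \<Rightarrow> real) \<Rightarrow> real set \<Rightarrow> nat list \<Rightarrow> real" where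
  "deleg_val p x c X [] = 0"
| "deleg_val p x c X (i # rest) =
     (if zv p x c i \<in> X
      then - c i + p i * x i + (1 - p i) * deleg_val p x c X rest
      else deleg_val p x c X rest)"

(* Adaptive self-search policies as decision trees:
   Stop None: stop, select nothing;  Stop (Some j): stop, select examined feasible option j;
   Exam i t_feas t_infeas: examine option i, continue with t_feas if feasible, else t_infeas. *)
datatype policy = Stop "nat option" | Exam nat policy policy

(* validity w.r.t. set E of already examined options and set F of examined feasible ones *)
fun valid_policy :: "nat \<Rightarrow> policy \<Rightarrow> nat set \<Rightarrow> nat set \<Rightarrow> bool" where
  "valid_policy m (Stop None) E F = True"
| "valid_policy m (Stop (Some j)) E F = (j \<in> F)"
| "valid_policy m (Exam i tf ti) E F =
     (i < m \<and> i \<notin> E \<and> valid_policy m tf (insert i E) (insert i F)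
            \<and> valid_policy m ti (insert i E) F)"

fun policy_val :: "(nat \<Rightarrow> real) \<Rightarrow> (nat \<Rightarrow> real) \<Rightarrow> (nat \<Rightarrow> real) \<Rightarrow> policy \<Rightarrow> real" where
  "policy_val p x c (Stop None) = 0"
| "policy_val p x c (Stop (Some j)) = x j"
| "policy_val p x c (Exam i tf ti) =
     - c i + p i * policy_val p x c tf + (1 - p i) * policy_val p x c ti"

end

theory Submission
  imports Defs
begin

(* Write z_i^+ = max z_i 0 and let OPT be the expected maximum of z_i^+ over the feasible options.
   Self-search never beats OPT: examining option i costs c_i = p_i (x_i - z_i), which pays in
   advance for the excess of x_i over z_i^+ collected when i turns out feasible (Weitzman's
   amortisation).  Against OPT the threshold mechanism with theta = OPT / 2 is a prophet
   inequality: if q is the probability that no eligible option is feasible, delegation yields at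
   least (1 - q) theta + q \<Sum> p_i (z_i - theta)^+, while OPT \<le> theta + \<Sum> p_i (z_i - theta)^+. *)

lemma convex_comb_mono:
  fixes q u u' w w' :: real
  assumes "0 \<le> q" "q \<le> 1" "u \<le> u'" "w \<le> w'"
  shows "q * u + (1 - q) * w \<le> q * u' + (1 - q) * w'"
  using assms by (intro add_mono mult_left_mono) auto

(* The expectation of the maximum of a and the values v i of the feasible options i in L,
   each option being feasible independently with probability p i. *)
fun expected_max :: "(nat \<Rightarrow> real) \<Rightarrow> (nat \<Rightarrow> real) \<Rightarrow> real \<Rightarrow> nat list \<Rightarrow> real" where
  "expected_max p v a [] = a"
| "expected_max p v a (i # L) =
     p i * expected_max p v (max a (v i)) L + (1 - p i) * expected_max p v a L"

lemma expected_max_ge: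
  assumes "\<forall>i\<in>set L. 0 \<le> p i \<and> p i \<le> 1"
  shows "a \<le> expected_max p v a L"
  using assms
proof (induction L arbitrary: a)
  case (Cons i L)
  have "a \<le> expected_max p v (max a (v i)) L"
    using Cons.IH[of "max a (v i)"] Cons.prems by fastforce
  moreover have "a \<le> expected_max p v a L"
    using Cons by simp
  ultimately have "p i * a + (1 - p i) * a \<le> expected_max p v a (i # L)"
    using convex_comb_mono Cons.prems by simp
  then show ?case
    by (simp add: algebra_simps)
qed simp

lemma expected_max_le_shift:
  assumes "\<forall>i\<in>set L. 0 \<le> p i \<and> p i \<le> 1" and "b' \<le> b"
  shows "expected_max p v b L \<le> expected_max p v b' L + (b - b')"
  using assms
proof (induction L arbitrary: b b')
  case (Cons i L)
  have "max b (v i) - max b' (v i) \<le> b - b'"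
    using Cons.prems by auto
  then have "expected_max p v (max b (v i)) L \<le> expected_max p v (max b' (v i)) L + (b - b')"
    using Cons.IH[of "max b' (v i)" "max b (v i)"] Cons.prems by fastforce
  moreover have "expected_max p v b L \<le> expected_max p v b' L + (b - b')"
    using Cons by simp
  ultimately have "p i * expected_max p v (max b (v i)) L + (1 - p i) * expected_max p v b L
      \<le> p i * (expected_max p v (max b' (v i)) L + (b - b'))
        + (1 - p i) * (expected_max p v b' L + (b - b'))"
    using convex_comb_mono Cons.prems by simp
  then show ?case
    by (simp add: algebra_simps)
qed simp

lemma expected_max_swap:
  "expected_max p v a (i # j # L) = expected_max p v a (j # i # L)"
proof -
  have "max (max a (v i)) (v j) = max (max a (v j)) (v i)"
    by (simp add: max.commute max.left_commute)
  then show ?thesis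
    by (simp add: algebra_simps)
qed

lemma expected_max_remove1:
  "i \<in> set L \<Longrightarrow> expected_max p v a L = expected_max p v a (i # remove1 i L)"
proof (induction L arbitrary: a)
  case (Cons j L)
  show ?case
  proof (cases "j = i")
    case False
    then have "i \<in> set L"
      using Cons.prems by auto
    then have "expected_max p v a (j # L) = expected_max p v a (j # i # remove1 i L)"
      using Cons.IH by simp
    also have "\<dots> = expected_max p v a (i # j # remove1 i L)"
      by (rule expected_max_swap)
    finally show ?thesis
      using False by simp
  qed simp
qed simp

lemma expected_max_le_threshold:
  assumes "\<forall>i\<in>set L. 0 \<le> p i \<and> p i \<le> 1"
  shows "expected_max p v a L \<le> max a t + (\<Sum>i\<leftarrow>L. p i * max (v i - t) 0)"
  using assms
proof (induction L arbitrary: a)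
  case (Cons i L)
  let ?S = "\<Sum>i\<leftarrow>L. p i * max (v i - t) 0"
  have "expected_max p v (max a (v i)) L \<le> max a t + max (v i - t) 0 + ?S"
    using Cons.IH[of "max a (v i)"] Cons.prems by (auto simp: max_def split: if_splits)
  moreover have "expected_max p v a L \<le> max a t + ?S"
    using Cons by simp
  ultimately have "expected_max p v a (i # L)
      \<le> p i * (max a t + max (v i - t) 0 + ?S) + (1 - p i) * (max a t + ?S)"
    using convex_comb_mono Cons.prems by simp
  then show ?case
    by (simp add: algebra_simps)
qed simp

lemma excess_over_zv_pos_le_cost:
  assumes "0 < p i"
  shows "p i * (x i - max (zv p x c i) 0) \<le> c i"
proof (cases "0 \<le> zv p x c i")
  case True
  then show ?thesis
    using assms by (simp add: zv_def algebra_simps)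
next
  case False
  then have "p i * x i < c i"
    using assms by (simp add: zv_def field_simps)
  then show ?thesis
    using False by simp
qed

lemma policy_val_le_expected_max:
  assumes probs: "\<forall>i<m. 0 < p i \<and> p i \<le> 1"
    and x_nonneg: "\<forall>i<m. 0 \<le> x i" and c_nonneg: "\<forall>i<m. 0 \<le> c i"
    and "valid_policy m t E F" and "\<forall>j\<in>F. x j \<le> a" and "0 \<le> a"
    and "distinct L" and "set L = {..<m} - E"
  shows "policy_val p x c t \<le> expected_max p (\<lambda>i. max (zv p x c i) 0) a L"
  using assms(4-)
proof (induction t arbitrary: E F a L)
  case (Stop s)
  have "a \<le> expected_max p (\<lambda>i. max (zv p x c i) 0) a L"
    using Stop.prems probs by (intro expected_max_ge) auto
  then show ?case
    using Stop.prems by (cases s) auto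
next
  case (Exam i tf ti)
  let ?v = "\<lambda>i. max (zv p x c i) 0"
  define L' where "L' = remove1 i L"
  have i: "i \<in> set L" "0 < p i" "p i \<le> 1"
    using Exam.prems probs by auto
  have max_diff_le: "max a u - max a w \<le> u - w" if "w \<le> u" for u w :: real
    using that by (simp add: max_def)
  have "?v i \<le> x i"
    using i x_nonneg c_nonneg Exam.prems by (auto simp: zv_def)
  have L': "distinct L'" "set L' = {..<m} - insert i E" "\<forall>j\<in>set L'. 0 \<le> p j \<and> p j \<le> 1"
    using Exam.prems probs by (auto simp: L'_def)
  have "policy_val p x c tf \<le> expected_max p ?v (max a (x i)) L'"
    using Exam.IH(1)[of "insert i E" "insert i F" "max a (x i)" L'] Exam.prems L'
    by (auto simp: le_max_iff_disj)
  also have "\<dots> \<le> expected_max p ?v (max a (?v i)) L' + (max a (x i) - max a (?v i))"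
    using expected_max_le_shift[OF L'(3) max.mono[OF order_refl \<open>?v i \<le> x i\<close>]] by simp
  also have "\<dots> \<le> expected_max p ?v (max a (?v i)) L' + (x i - ?v i)"
    using max_diff_le[OF \<open>?v i \<le> x i\<close>] by simp
  finally have "p i * policy_val p x c tf
      \<le> p i * (expected_max p ?v (max a (?v i)) L' + (x i - ?v i))"
    using i by (simp add: mult_left_mono)
  then have feasible: "p i * policy_val p x c tf \<le> p i * expected_max p ?v (max a (?v i)) L' + c i"
    using excess_over_zv_pos_le_cost[of p i x c] i by (simp add: distrib_left)
  have "policy_val p x c ti \<le> expected_max p ?v a L'"
    using Exam.IH(2)[of "insert i E" F a L'] Exam.prems L' by auto
  then have infeasible: "(1 - p i) * policy_val p x c ti \<le> (1 - p i) * expected_max p ?v a L'"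
    using i by (simp add: mult_left_mono)
  have "expected_max p ?v a L = p i * expected_max p ?v (max a (?v i)) L' + (1 - p i) * expected_max p ?v a L'"
    using expected_max_remove1[OF i(1)] by (simp add: L'_def)
  then show ?case
    using feasible infeasible by simp
qed

fun prob_none_accepted :: "(nat \<Rightarrow> real) \<Rightarrow> (nat \<Rightarrow> real) \<Rightarrow> (nat \<Rightarrow> real) \<Rightarrow> real set \<Rightarrow> nat list \<Rightarrow> real" where
  "prob_none_accepted p x c X [] = 1"
| "prob_none_accepted p x c X (i # L) =
     (if zv p x c i \<in> X then (1 - p i) * prob_none_accepted p x c X L
      else prob_none_accepted p x c X L)"

lemma prob_none_accepted_bounds:
  assumes "\<forall>i\<in>set L. 0 \<le> p i \<and> p i \<le> 1"
  shows "0 \<le> prob_none_accepted p x c X L \<and> prob_none_accepted p x c X L \<le> 1"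
  using assms by (induction L) (auto simp: mult_le_one)

lemma deleg_val_threshold_ge:
  assumes probs: "\<forall>i\<in>set L. 0 < p i \<and> p i \<le> 1" and "0 \<le> \<theta>"
  shows "(1 - prob_none_accepted p x c {\<theta>..} L) * \<theta>
           + prob_none_accepted p x c {\<theta>..} L * (\<Sum>i\<leftarrow>L. p i * max (max (zv p x c i) 0 - \<theta>) 0)
         \<le> deleg_val p x c {\<theta>..} L"
  using probs
proof (induction L)
  case (Cons i L)
  define q where "q = prob_none_accepted p x c {\<theta>..} L"
  define S where "S = (\<Sum>i\<leftarrow>L. p i * max (max (zv p x c i) 0 - \<theta>) 0)"
  define D where "D = deleg_val p x c {\<theta>..} L"
  have p: "0 < p i" "p i \<le> 1"
    using Cons.prems by auto
  have "\<forall>j\<in>set L. 0 \<le> p j \<and> p j \<le> 1"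
    using Cons.prems by auto
  then have q: "0 \<le> q" "q \<le> 1"
    using prob_none_accepted_bounds unfolding q_def by blast+
  have IH: "(1 - q) * \<theta> + q * S \<le> D"
    using Cons unfolding q_def S_def D_def by simp
  show ?case
  proof (cases "\<theta> \<le> zv p x c i")
    case True
    have "(1 - p i) * ((1 - q) * \<theta> + q * S) \<le> (1 - p i) * D"
      using IH p by (simp add: mult_left_mono)
    moreover have "0 \<le> p i * (zv p x c i - \<theta>) * (1 - (1 - p i) * q)"
      using p q True by (simp add: mult_le_one)
    moreover have "- c i + p i * x i = p i * zv p x c i"
      using p by (simp add: zv_def field_simps)
    ultimately show ?thesis
      using True \<open>0 \<le> \<theta>\<close> unfolding q_def S_def D_def by (simp add: algebra_simps)
  next
    case False
    then show ?thesis
      using Cons \<open>0 \<le> \<theta>\<close> by simp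
  qed
qed simp

lemma expected_max_le_twice_deleg_val:
  assumes probs: "\<forall>i\<in>set L. 0 < p i \<and> p i \<le> 1"
    and \<theta>_def: "\<theta> = expected_max p (\<lambda>i. max (zv p x c i) 0) 0 L / 2"
  shows "expected_max p (\<lambda>i. max (zv p x c i) 0) 0 L \<le> 2 * deleg_val p x c {\<theta>..} L"
proof -
  define q where "q = prob_none_accepted p x c {\<theta>..} L"
  define S where "S = (\<Sum>i\<leftarrow>L. p i * max (max (zv p x c i) 0 - \<theta>) 0)"
  have probs': "\<forall>i\<in>set L. 0 \<le> p i \<and> p i \<le> 1"
    using probs by auto
  have "0 \<le> \<theta>"
    using expected_max_ge[OF probs'] unfolding \<theta>_def by simp
  have "0 \<le> q"
    using prob_none_accepted_bounds[OF probs'] unfolding q_def by blast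
  have "expected_max p (\<lambda>i. max (zv p x c i) 0) 0 L \<le> \<theta> + S"
    using expected_max_le_threshold[OF probs', of "\<lambda>i. max (zv p x c i) 0" 0 \<theta>] \<open>0 \<le> \<theta>\<close>
    unfolding S_def by simp
  then have "\<theta> \<le> S"
    unfolding \<theta>_def by simp
  then have "\<theta> \<le> (1 - q) * \<theta> + q * S"
    using \<open>0 \<le> q\<close> mult_left_mono[of \<theta> S q] by (simp add: algebra_simps)
  also have "\<dots> \<le> deleg_val p x c {\<theta>..} L"
    using deleg_val_threshold_ge[OF probs \<open>0 \<le> \<theta>\<close>] unfolding q_def S_def .
  finally show ?thesis
    unfolding \<theta>_def by simp
qed

theorem mainTheorem1:
  fixes m :: nat and p x y c :: "nat \<Rightarrow> real" and ord :: "nat list"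
  assumes p_pos: "\<forall>i<m. 0 < p i \<and> p i \<le> 1"
    and x_nonneg: "\<forall>i<m. 0 \<le> x i"
    and c_nonneg: "\<forall>i<m. 0 \<le> c i"
    and c_le: "\<forall>i<m. c i \<le> p i * y i"
    and ord_perm: "distinct ord \<and> set ord = {..<m}"
    and ord_sorted: "sorted_wrt (\<lambda>i j. wv p y c j \<le> wv p y c i) ord"
  shows "\<exists>\<theta>::real. \<exists>X. (X = {\<theta><..} \<or> X = {\<theta>..}) \<and>
           (\<forall>t. valid_policy m t {} {} \<longrightarrow>
                 policy_val p x c t \<le> 2 * deleg_val p x c X ord)"
proof -
  (* c_le and ord_sorted only make the fixed order a best response of the agent;
     the bound holds for every order. *)
  let ?opt = "expected_max p (\<lambda>i. max (zv p x c i) 0) 0 ord"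
  have "\<forall>i\<in>set ord. 0 < p i \<and> p i \<le> 1"
    using ord_perm p_pos by auto
  then have "?opt \<le> 2 * deleg_val p x c {?opt / 2..} ord"
    by (rule expected_max_le_twice_deleg_val) (rule refl)
  moreover have "policy_val p x c t \<le> ?opt" if "valid_policy m t {} {}" for t
    using policy_val_le_expected_max[OF p_pos x_nonneg c_nonneg that] ord_perm by simp
  ultimately show ?thesis
    by (intro exI[of _ "?opt / 2"] exI[of _ "{?opt / 2..}"]) (auto intro: order_trans)
qed

end
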